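(* If $(X_1,X_2)$ is an extensible pair, then $\gcd(\Delta_1\Delta_2,\det Z_k)=1$ for all $k\ge1$.
   Context: A marked Dynkin diagram $(X,\xi)$ is the Dynkin diagram of a symmetrizable generalized Cartan matrix $C(X)$ with a distinguished node $\xi$; $\det X:=\det C(X)$; $X(-1)$ is $X$ with $\xi$ and its incident edges deleted ($\det$ of the empty diagram is $1$); $\Delta_X=\det X-\det X(-1)$, and $\Delta_i:=\Delta_{X_i}$. A pair $(X_1,\xi_1),(X_2,\xi_2)$ of marked Dynkin diagrams is an extensible pair if $\det X_i\neq0$, $\Delta_i\ne0$, $\gcd(\det X_i,\Delta_i)=1$ for $i=1,2$, and $\gcd(\Delta_1,\Delta_2)=1$. $Z_k=Z_k(X_1,X_2)$ is obtained from the disjoint union of $X_1$, a path $A_k$ with nodes $1,\dots,k$ and $X_2$ by adding simple edges $\xi_1$—$1$ and $k$—$\xi_2$; $\det Z_k$ is the determinant of its Cartan matrix. *)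

theory Defs
  imports "Jordan_Normal_Form.Determinant"
begin

text \<open>A (marked) Dynkin diagram is identified with its generalized Cartan matrix,
an integer square matrix; nodes are the indices 0..n-1.\<close>

definition gen_cartan :: "int mat \<Rightarrow> bool" where
  "gen_cartan A \<longleftrightarrow> dim_row A = dim_col A \<and>
     (\<forall>i < dim_row A. A $$ (i,i) = 2) \<and>
     (\<forall>i < dim_row A. \<forall>j < dim_row A. i \<noteq> j \<longrightarrow> A $$ (i,j) \<le> 0) \<and>
     (\<forall>i < dim_row A. \<forall>j < dim_row A. A $$ (i,j) = 0 \<longleftrightarrow> A $$ (j,i) = 0)"

definition symmetrizable :: "int mat \<Rightarrow> bool" where
  "symmetrizable A \<longleftrightarrow> (\<exists>d :: nat \<Rightarrow> real. (\<forall>i < dim_row A. d i > 0) \<and>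
     (\<forall>i < dim_row A. \<forall>j < dim_row A. d i * real_of_int (A $$ (i,j)) = d j * real_of_int (A $$ (j,i))))"

definition marked_dynkin :: "int mat \<Rightarrow> nat \<Rightarrow> bool" where
  "marked_dynkin A \<xi> \<longleftrightarrow> gen_cartan A \<and> symmetrizable A \<and> \<xi> < dim_row A"

definition del_node :: "int mat \<Rightarrow> nat \<Rightarrow> int mat" where
  "del_node A \<xi> = mat_delete A \<xi> \<xi>"

definition Delta :: "int mat \<Rightarrow> nat \<Rightarrow> int" where
  "Delta A \<xi> = det A - det (del_node A \<xi>)"

definition extensible_pair :: "int mat \<Rightarrow> nat \<Rightarrow> int mat \<Rightarrow> nat \<Rightarrow> bool" where
  "extensible_pair A1 \<xi>1 A2 \<xi>2 \<longleftrightarrow> marked_dynkin A1 \<xi>1 \<and> marked_dynkin A2 \<xi>2 \<and>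
     det A1 \<noteq> 0 \<and> Delta A1 \<xi>1 \<noteq> 0 \<and> gcd (det A1) (Delta A1 \<xi>1) = 1 \<and>
     det A2 \<noteq> 0 \<and> Delta A2 \<xi>2 \<noteq> 0 \<and> gcd (det A2) (Delta A2 \<xi>2) = 1 \<and>
     gcd (Delta A1 \<xi>1) (Delta A2 \<xi>2) = 1"

text \<open>Cartan matrix of Z_k: nodes of X1 are 0..n1-1, path nodes n1..n1+k-1
 (path node m is index n1+m-1), nodes of X2 are n1+k..n1+k+n2-1;
 simple edges \<xi>1 -- (path node 1) and (path node k) -- \<xi>2.\<close>
definition Zk :: "int mat \<Rightarrow> nat \<Rightarrow> int mat \<Rightarrow> nat \<Rightarrow> nat \<Rightarrow> int mat" where
  "Zk A1 \<xi>1 A2 \<xi>2 k = (let n1 = dim_row A1; n2 = dim_row A2; N = n1 + k + n2 in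
     mat N N (\<lambda>(i,j).
       if i < n1 \<and> j < n1 then A1 $$ (i,j)
       else if n1 + k \<le> i \<and> n1 + k \<le> j then A2 $$ (i - (n1+k), j - (n1+k))
       else if n1 \<le> i \<and> i < n1 + k \<and> n1 \<le> j \<and> j < n1 + k then
         (if i = j then 2 else if i = j + 1 \<or> j = i + 1 then -1 else 0)
       else if (i = \<xi>1 \<and> j = n1) \<or> (i = n1 \<and> j = \<xi>1) then -1
       else if (i = n1 + k - 1 \<and> j = n1 + k + \<xi>2) \<or> (j = n1 + k - 1 \<and> i = n1 + k + \<xi>2) then -1
       else 0))"

end

theory Submission
  imports Defs
begin

text \<open>Joining two diagrams A and B by a simple edge between nodes p and q gives
  det = det A * det B - det A(-p) * det B(-q), by expanding along the two rows carrying the edge.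
  For a path attached to X at node x this is the recursion d(k+1) = 2 d(k) - d(k-1), whence
  d(k) = det X + k * Delta_X.  Joining X1 to the path attached to X2 then gives
  det Z_k = det X1 * Delta_2 + Delta_1 * det X2 + (k - 1) * Delta_1 * Delta_2,
  which is congruent to det X1 * Delta_2 modulo Delta_1 and to Delta_1 * det X2 modulo Delta_2,
  a unit in both cases by the coprimality conditions of an extensible pair.\<close>

lemma det_mat_split_row:
  fixes f :: "nat \<times> nat \<Rightarrow> 'a :: comm_ring_1"
  assumes k: "k < n" and row_k: "\<And>j. j < n \<Longrightarrow> f (k,j) = g j + h j"
  shows "det (mat n n f) = det (mat n n (\<lambda>(i,j). if i = k then g j else f (i,j)))
     + det (mat n n (\<lambda>(i,j). if i = k then h j else f (i,j)))"
proof -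
  let ?row = "\<lambda>i. vec n (\<lambda>j. f (i,j))"
  have "mat n n f = mat\<^sub>r n n (\<lambda>i. if i = k then vec n g + vec n h else ?row i)"
    and "mat n n (\<lambda>(i,j). if i = k then g j else f (i,j)) = mat\<^sub>r n n (\<lambda>i. if i = k then vec n g else ?row i)"
    and "mat n n (\<lambda>(i,j). if i = k then h j else f (i,j)) = mat\<^sub>r n n (\<lambda>i. if i = k then vec n h else ?row i)"
    by (rule eq_matI; auto simp: row_k)+
  then show ?thesis
    using det_row_add[OF _ _ _ k, of "\<lambda>_. vec n g" "\<lambda>_. vec n h" ?row] by auto
qed

lemma det_mat_unit_row:
  fixes A :: "'a :: comm_ring_1 mat"
  assumes A: "A \<in> carrier_mat n n" and p: "p < n"
  shows "det (mat n n (\<lambda>(i,j). if i = p then (if j = p then c else 0) else A $$ (i,j)))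
     = c * det (mat_delete A p p)"
proof -
  let ?A = "mat n n (\<lambda>(i,j). if i = p then (if j = p then c else 0) else A $$ (i,j))"
  have "det ?A = (\<Sum>j<n. ?A $$ (p,j) * cofactor ?A p j)"
    by (rule laplace_expansion_row[OF _ p]) auto
  also have "\<dots> = c * cofactor ?A p p"
    using p by (subst sum.remove[of _ p]) auto
  also have "mat_delete ?A p p = mat_delete A p p"
    using A p by (intro eq_matI) (auto simp: mat_delete_def)
  then have "cofactor ?A p p = det (mat_delete A p p)"
    unfolding cofactor_def by simp
  finally show ?thesis .
qed

definition join_edge :: "'a :: {zero, uminus, one} mat \<Rightarrow> nat \<Rightarrow> 'a mat \<Rightarrow> nat \<Rightarrow> 'a mat" where
  "join_edge A p B q = (let n = dim_row A; m = dim_row B in mat (n + m) (n + m) (\<lambda>(i,j).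
     if i < n \<and> j < n then A $$ (i,j)
     else if n \<le> i \<and> n \<le> j then B $$ (i - n, j - n)
     else if (i = p \<and> j = n + q) \<or> (i = n + q \<and> j = p) then -1 else 0))"

lemma join_edge_carrier:
  "A \<in> carrier_mat n n \<Longrightarrow> B \<in> carrier_mat m m \<Longrightarrow> join_edge A p B q \<in> carrier_mat (n + m) (n + m)"
  unfolding join_edge_def by auto

lemma join_edge_index:
  assumes "A \<in> carrier_mat n n" "B \<in> carrier_mat m m" "i < n + m" "j < n + m"
  shows "join_edge A p B q $$ (i,j) = (if i < n \<and> j < n then A $$ (i,j)
     else if n \<le> i \<and> n \<le> j then B $$ (i - n, j - n)
     else if (i = p \<and> j = n + q) \<or> (i = n + q \<and> j = p) then -1 else 0)"
  using assms unfolding join_edge_def by auto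

lemma mat_delete_join_edge_0:
  assumes "B \<in> carrier_mat m m"
  shows "mat_delete (join_edge (mat 1 1 (\<lambda>_. c)) 0 B q) 0 0 = B"
  by (rule eq_matI) (use assms in \<open>auto simp: join_edge_def mat_delete_def\<close>)

lemma det_join_edge:
  fixes A B :: "'a :: idom mat"
  assumes A: "A \<in> carrier_mat n n" and B: "B \<in> carrier_mat m m" and p: "p < n" and q: "q < m"
  shows "det (join_edge A p B q) = det A * det B - det (mat_delete A p p) * det (mat_delete B q q)"
proof -
  \<comment> \<open>Split off the edge entry of row p, then that of row n + q.\<close>
  define F where "F = (\<lambda>(i,j). if i < n \<and> j < n then A $$ (i,j)
     else if n \<le> i \<and> n \<le> j then B $$ (i - n, j - n)
     else if (i = p \<and> j = n + q) \<or> (i = n + q \<and> j = p) then -1 else 0)"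
  define F1 where "F1 = (\<lambda>(i,j). if i = p then (if j = n + q then 0 else F (p,j)) else F (i,j))"
  define F2 where "F2 = (\<lambda>(i,j). if i = p then (if j = n + q then -1 else 0) else F (i,j))"
  define F21 where "F21 = (\<lambda>(i,j). if i = n + q then (if j = p then 0 else F2 (n + q,j)) else F2 (i,j))"
  define F22 where "F22 = (\<lambda>(i,j). if i = n + q then (if j = p then -1 else 0) else F2 (i,j))"
  let ?M = "\<lambda>G. mat (n + m) (n + m) G"
  have "join_edge A p B q = ?M F"
    using A B unfolding join_edge_def F_def by auto
  moreover have "det (?M F) = det (?M F1) + det (?M F2)"
    unfolding F1_def F2_def by (rule det_mat_split_row) (use p in \<open>auto simp: F_def\<close>)
  moreover have "det (?M F2) = det (?M F21) + det (?M F22)"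
    unfolding F21_def F22_def by (rule det_mat_split_row) (use p q in \<open>auto simp: F_def F2_def\<close>)
  moreover have "det (?M F1) = det A * det B"
  proof -
    have "?M F1 = four_block_mat A (0\<^sub>m n m) (mat m n (\<lambda>(i,j). if i = q \<and> j = p then -1 else 0)) B"
      by (rule eq_matI) (use A B p q in \<open>auto simp: F1_def F_def\<close>)
    then show ?thesis
      using det_four_block_mat_upper_right_zero[OF A refl _ B] by simp
  qed
  moreover have "det (?M F21) = 0"
  proof -
    let ?A0 = "mat n n (\<lambda>(i,j). if i = p then (if j = p then 0 else 0) else A $$ (i,j))"
    have "?M F21 = four_block_mat ?A0 (mat n m (\<lambda>(i,j). if i = p \<and> j = q then -1 else 0)) (0\<^sub>m m n) B"
      by (rule eq_matI) (use A B p q in \<open>auto simp: F21_def F2_def F_def\<close>)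
    then show ?thesis
      using det_four_block_mat_lower_left_zero[OF _ _ refl B, of ?A0 n] det_mat_unit_row[OF A p, of 0]
      by simp
  qed
  moreover have "det (?M F22) = - (det (mat_delete A p p) * det (mat_delete B q q))"
  proof -
    let ?A1 = "mat n n (\<lambda>(i,j). if i = p then (if j = p then -1 else 0) else A $$ (i,j))"
    let ?B1 = "mat m m (\<lambda>(i,j). if i = q then (if j = q then -1 else 0) else B $$ (i,j))"
    have "swaprows p (n + q) (?M F22) = four_block_mat ?A1 (0\<^sub>m n m) (0\<^sub>m m n) ?B1"
      by (rule eq_matI) (use A B p q in \<open>auto simp: F22_def F2_def F_def\<close>)
    moreover have "det (swaprows p (n + q) (?M F22)) = - det (?M F22)"
      by (rule det_swaprows[of _ "n + m"]) (use p q in auto)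
    ultimately show ?thesis
      using det_four_block_mat_lower_left_zero[of ?A1 n "0\<^sub>m n m" m "0\<^sub>m m n" ?B1]
        det_mat_unit_row[OF A p, of "-1"] det_mat_unit_row[OF B q, of "-1"]
      by simp
  qed
  ultimately show ?thesis by simp
qed

definition attach_path :: "int mat \<Rightarrow> nat \<Rightarrow> nat \<Rightarrow> int mat" where
  "attach_path A x k = mat (k + dim_row A) (k + dim_row A) (\<lambda>(i,j).
     if k \<le> i \<and> k \<le> j then A $$ (i - k, j - k)
     else if i < k \<and> j < k then (if i = j then 2 else if i = j + 1 \<or> j = i + 1 then -1 else 0)
     else if (i + 1 = k \<and> j = k + x) \<or> (j + 1 = k \<and> i = k + x) then -1 else 0)"

lemma attach_path_carrier: "A \<in> carrier_mat n n \<Longrightarrow> attach_path A x k \<in> carrier_mat (k + n) (k + n)"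
  unfolding attach_path_def by simp

lemma attach_path_index:
  assumes "A \<in> carrier_mat n n" "i < k + n" "j < k + n"
  shows "attach_path A x k $$ (i,j) = (if k \<le> i \<and> k \<le> j then A $$ (i - k, j - k)
     else if i < k \<and> j < k then (if i = j then 2 else if i = j + 1 \<or> j = i + 1 then -1 else 0)
     else if (i + 1 = k \<and> j = k + x) \<or> (j + 1 = k \<and> i = k + x) then -1 else 0)"
  using assms unfolding attach_path_def by auto

lemma attach_path_0: "A \<in> carrier_mat n n \<Longrightarrow> attach_path A x 0 = A"
  unfolding attach_path_def by (rule eq_matI) auto

lemma attach_path_Suc:
  assumes A: "A \<in> carrier_mat n n"
  shows "attach_path A x (Suc k) = join_edge (mat 1 1 (\<lambda>_. 2)) 0 (attach_path A x k) (if k = 0 then x else 0)"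
    (is "_ = ?J")
proof -
  have P: "attach_path A x k \<in> carrier_mat (k + n) (k + n)" and E: "mat 1 1 (\<lambda>_. 2) \<in> carrier_mat 1 1"
    using attach_path_carrier[OF A] by auto
  have J: "?J \<in> carrier_mat (1 + (k + n)) (1 + (k + n))"
    by (rule join_edge_carrier[OF E P])
  show ?thesis
  proof (rule eq_matI)
    fix i j assume "i < dim_row ?J" "j < dim_col ?J"
    then have ij: "i < 1 + (k + n)" "j < 1 + (k + n)"
      using J by auto
    have ij': "i < Suc k + n" "j < Suc k + n"
      using ij by simp_all
    show "attach_path A x (Suc k) $$ (i,j) = ?J $$ (i,j)"
    proof (cases "i = 0 \<or> j = 0")
      case True
      then show ?thesis
        unfolding join_edge_index[OF E P ij] attach_path_index[OF A ij'] using ij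
        by (cases k; elim disjE; simp)
    next
      case False
      then obtain i' j' where "i = Suc i'" "j = Suc j'"
        using not0_implies_Suc by blast
      with ij show ?thesis
        unfolding join_edge_index[OF E P ij] attach_path_index[OF A ij']
        by (simp add: attach_path_index[OF A])
    qed
  qed (use J attach_path_carrier[OF A, of x "Suc k"] in auto)
qed

lemma mat_delete_attach_path_Suc:
  "A \<in> carrier_mat n n \<Longrightarrow> mat_delete (attach_path A x (Suc k)) 0 0 = attach_path A x k"
  unfolding attach_path_Suc by (rule mat_delete_join_edge_0[OF attach_path_carrier])

lemma det_attach_path:
  assumes A: "A \<in> carrier_mat n n" and x: "x < n"
  shows "det (attach_path A x k) = det A + int k * Delta A x"
proof -
  have E: "mat 1 1 (\<lambda>_. 2 :: int) \<in> carrier_mat 1 1"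
    by simp
  have "det (mat 1 1 (\<lambda>_. 2 :: int)) = 2"
    using det_single[OF E] by simp
  moreover have "det (mat_delete (mat 1 1 (\<lambda>_. 2 :: int)) 0 0) = 1"
    using mat_delete_carrier[OF E, of 0 0] by simp
  ultimately have recurrence: "det (attach_path A x (Suc k)) =
      2 * det (attach_path A x k) - det (mat_delete (attach_path A x k) (if k = 0 then x else 0) (if k = 0 then x else 0))"
    for k
    unfolding attach_path_Suc[OF A]
    by (subst det_join_edge[OF E attach_path_carrier[OF A]]) (use x in auto)
  show ?thesis
  proof (induction k rule: induct_nat_012)
    case 0
    then show ?case by (simp add: attach_path_0[OF A])
  next
    case 1
    then show ?case
      using recurrence[of 0] by (simp add: attach_path_0[OF A] Delta_def del_node_def)
  next
    case (ge2 k)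
    then show ?case
      using recurrence[of "Suc k"] mat_delete_attach_path_Suc[OF A, of x k] by (simp add: algebra_simps)
  qed
qed

lemma Zk_carrier:
  "A1 \<in> carrier_mat n1 n1 \<Longrightarrow> A2 \<in> carrier_mat n2 n2 \<Longrightarrow>
    Zk A1 x1 A2 x2 k \<in> carrier_mat (n1 + (k + n2)) (n1 + (k + n2))"
  unfolding Zk_def Let_def by (simp add: add.assoc)

lemma Zk_index:
  assumes A1: "A1 \<in> carrier_mat n1 n1" and A2: "A2 \<in> carrier_mat n2 n2"
    and "i < n1 + (k + n2)" "j < n1 + (k + n2)"
  shows "Zk A1 x1 A2 x2 k $$ (i,j) = (if i < n1 \<and> j < n1 then A1 $$ (i,j)
       else if n1 + k \<le> i \<and> n1 + k \<le> j then A2 $$ (i - (n1 + k), j - (n1 + k))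
       else if n1 \<le> i \<and> i < n1 + k \<and> n1 \<le> j \<and> j < n1 + k then
         (if i = j then 2 else if i = j + 1 \<or> j = i + 1 then -1 else 0)
       else if (i = x1 \<and> j = n1) \<or> (i = n1 \<and> j = x1) then -1
       else if (i = n1 + k - 1 \<and> j = n1 + k + x2) \<or> (j = n1 + k - 1 \<and> i = n1 + k + x2) then -1
       else 0)"
  using assms(3,4) unfolding Zk_def Let_def carrier_matD[OF A1] carrier_matD[OF A2] add.assoc
  by (subst index_mat(1)) (simp_all only: prod.case)

lemma Zk_index_shift:
  assumes A1: "A1 \<in> carrier_mat n1 n1" and A2: "A2 \<in> carrier_mat n2 n2"
    and x1: "x1 < n1" and k: "k \<ge> 1" and ij: "i < k + n2" "j < k + n2"
  shows "Zk A1 x1 A2 x2 k $$ (n1 + i, n1 + j) = attach_path A2 x2 k $$ (i, j)"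
proof -
  have bounds: "n1 + i < n1 + (k + n2)" "n1 + j < n1 + (k + n2)"
    using ij by simp_all
  consider "k \<le> i \<and> k \<le> j" | "i < k \<and> j < k" | "\<not> (k \<le> i \<and> k \<le> j)" "\<not> (i < k \<and> j < k)"
    by blast
  then show ?thesis
  proof cases
    case 3
    have "\<not> (n1 + i < n1 \<and> n1 + j < n1)" "\<not> (n1 + k \<le> n1 + i \<and> n1 + k \<le> n1 + j)"
      "\<not> (n1 \<le> n1 + i \<and> n1 + i < n1 + k \<and> n1 \<le> n1 + j \<and> n1 + j < n1 + k)"
      "\<not> ((n1 + i = x1 \<and> n1 + j = n1) \<or> (n1 + i = n1 \<and> n1 + j = x1))"
      "((n1 + i = n1 + k - 1 \<and> n1 + j = n1 + k + x2) \<or> (n1 + j = n1 + k - 1 \<and> n1 + i = n1 + k + x2)) \<longleftrightarrow>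
       ((i + 1 = k \<and> j = k + x2) \<or> (j + 1 = k \<and> i = k + x2))"
      using 3 x1 k by auto
    then show ?thesis
      unfolding Zk_index[OF A1 A2 bounds] attach_path_index[OF A2 ij] using 3 by (simp only: if_False)
  qed (simp_all add: Zk_index[OF A1 A2 bounds] attach_path_index[OF A2 ij])
qed

lemma Zk_eq_join_edge_attach_path:
  assumes A1: "A1 \<in> carrier_mat n1 n1" and A2: "A2 \<in> carrier_mat n2 n2"
    and x1: "x1 < n1" and k: "k \<ge> 1"
  shows "Zk A1 x1 A2 x2 k = join_edge A1 x1 (attach_path A2 x2 k) 0" (is "?Z = ?J")
proof -
  have P: "attach_path A2 x2 k \<in> carrier_mat (k + n2) (k + n2)"
    by (rule attach_path_carrier[OF A2])
  have J: "?J \<in> carrier_mat (n1 + (k + n2)) (n1 + (k + n2))"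
    by (rule join_edge_carrier[OF A1 P])
  show ?thesis
  proof (rule eq_matI)
    fix i j assume "i < dim_row ?J" "j < dim_col ?J"
    then have ij: "i < n1 + (k + n2)" "j < n1 + (k + n2)"
      using J by auto
    have Jij: "?J $$ (i,j) = (if i < n1 \<and> j < n1 then A1 $$ (i,j)
       else if n1 \<le> i \<and> n1 \<le> j then attach_path A2 x2 k $$ (i - n1, j - n1)
       else if (i = x1 \<and> j = n1) \<or> (i = n1 \<and> j = x1) then -1 else 0)"
      using join_edge_index[OF A1 P ij] by (simp only: add_0_right)
    consider (left) "i < n1 \<and> j < n1" | (right) i' j' where "i = n1 + i'" "j = n1 + j'"
      | (cross) "\<not> (i < n1 \<and> j < n1)" "\<not> (n1 \<le> i \<and> n1 \<le> j)"
      using le_Suc_ex by blast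
    then show "?Z $$ (i,j) = ?J $$ (i,j)"
    proof cases
      case left
      then show ?thesis
        unfolding Jij Zk_index[OF A1 A2 ij] by simp
    next
      case right
      then show ?thesis
        using Zk_index_shift[OF A1 A2 x1 k, of i' j'] ij unfolding Jij by simp
    next
      case cross
      have "\<not> (n1 + k \<le> i \<and> n1 + k \<le> j)" "\<not> (n1 \<le> i \<and> i < n1 + k \<and> n1 \<le> j \<and> j < n1 + k)"
        "\<not> ((i = n1 + k - 1 \<and> j = n1 + k + x2) \<or> (j = n1 + k - 1 \<and> i = n1 + k + x2))"
        using cross k by auto
      then show ?thesis
        unfolding Jij Zk_index[OF A1 A2 ij] using cross by (simp only: if_False)
    qed
  qed (use J Zk_carrier[OF A1 A2] in auto)
qed

lemma det_Zk:
  assumes A1: "A1 \<in> carrier_mat n1 n1" and A2: "A2 \<in> carrier_mat n2 n2"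
    and x1: "x1 < n1" and x2: "x2 < n2" and k: "k \<ge> 1"
  shows "det (Zk A1 x1 A2 x2 k) = det A1 * Delta A2 x2 + Delta A1 x1 * det A2
    + int (k - 1) * Delta A1 x1 * Delta A2 x2"
proof -
  obtain l where l: "k = Suc l"
    using k by (cases k) auto
  have "det (Zk A1 x1 A2 x2 k) =
      det A1 * det (attach_path A2 x2 (Suc l)) - det (del_node A1 x1) * det (attach_path A2 x2 l)"
    unfolding Zk_eq_join_edge_attach_path[OF A1 A2 x1 k] unfolding l del_node_def
    using det_join_edge[OF A1 attach_path_carrier[OF A2] x1, of 0 "Suc l" x2]
    by (simp add: mat_delete_attach_path_Suc[OF A2])
  then show ?thesis
    unfolding det_attach_path[OF A2 x2] l Delta_def by (simp add: algebra_simps)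
qed

lemma coprime_cross_sum:
  fixes d1 d2 e1 e2 c :: "'a :: ring_gcd"
  assumes "coprime e1 d1" "coprime e2 d2" "coprime e1 e2"
  shows "coprime (e1 * e2) (d1 * e2 + e1 * d2 + c * e1 * e2)"
proof -
  have "gcd e1 (d1 * e2 + e1 * d2 + c * e1 * e2) = gcd e1 (d1 * e2)"
    using gcd_add_mult[of e1 "d2 + c * e2" "d1 * e2"] by (simp add: algebra_simps)
  moreover have "gcd e2 (d1 * e2 + e1 * d2 + c * e1 * e2) = gcd e2 (e1 * d2)"
    using gcd_add_mult[of e2 "d1 + c * e1" "e1 * d2"] by (simp add: algebra_simps)
  ultimately show ?thesis
    using assms by (simp add: coprime_iff_gcd_eq_1[symmetric] coprime_commute)
qed

theorem lemma3p8:
  fixes A1 A2 :: "int mat" and \<xi>1 \<xi>2 k :: nat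
  assumes "extensible_pair A1 \<xi>1 A2 \<xi>2"
    and "k \<ge> 1"
  shows "gcd (Delta A1 \<xi>1 * Delta A2 \<xi>2) (det (Zk A1 \<xi>1 A2 \<xi>2 k)) = 1"
proof -
  have A1: "A1 \<in> carrier_mat (dim_row A1) (dim_row A1)" and A2: "A2 \<in> carrier_mat (dim_row A2) (dim_row A2)"
    and x1: "\<xi>1 < dim_row A1" and x2: "\<xi>2 < dim_row A2"
    using assms(1) unfolding extensible_pair_def marked_dynkin_def gen_cartan_def carrier_mat_def by auto
  have "coprime (Delta A1 \<xi>1) (det A1)" "coprime (Delta A2 \<xi>2) (det A2)"
    "coprime (Delta A1 \<xi>1) (Delta A2 \<xi>2)"
    using assms(1) unfolding extensible_pair_def coprime_iff_gcd_eq_1 by (simp_all add: gcd.commute)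
  then have "coprime (Delta A1 \<xi>1 * Delta A2 \<xi>2) (det (Zk A1 \<xi>1 A2 \<xi>2 k))"
    unfolding det_Zk[OF A1 A2 x1 x2 assms(2)] by (rule coprime_cross_sum)
  then show ?thesis
    by (simp add: coprime_iff_gcd_eq_1)
qed

end
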